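(* Let $\mathcal A$ be a $C^*$-algebra with identity $1$, let $\delta\colon\mathcal A\to\mathcal A$ be a $^*$-endomorphism, and let $\delta_{*1},\delta_{*2}$ be two non-degenerate transfer operators for $(\mathcal A,\delta)$. Then $\delta_{*1}(1)=\delta_{*2}(1)$ and $\delta_{*1}(\mathcal A)=\delta_{*2}(\mathcal A)$.
   Context: A transfer operator for $(\mathcal A,\delta)$ is a continuous positive linear map $\delta_*\colon\mathcal A\to\mathcal A$ such that $\delta_*(\delta(a)b)=a\,\delta_*(b)$ for all $a,b\in\mathcal A$. A transfer operator $\delta_*$ is called non-degenerate if $\delta(\delta_*(1))=\delta(1)$ (equivalently, $\delta\circ\delta_*\circ\delta=\delta$). *)

theory Defs
  imports "HOL-Analysis.Analysis"
begin

text \<open>A unital C*-algebra: a complex Banach algebra with identity (the real Banach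
algebra structure comes from the type class, complex scalar multiplication is the
parameter scaleC, compatible with the real one), with an involution star satisfying
the C*-identity.\<close>

locale cstar_algebra =
  fixes scaleC :: "complex \<Rightarrow> 'a::{real_normed_algebra_1, banach} \<Rightarrow> 'a"
    and star :: "'a \<Rightarrow> 'a"
  assumes scaleC_add_right: "scaleC c (x + y) = scaleC c x + scaleC c y"
    and scaleC_add_left: "scaleC (c + d) x = scaleC c x + scaleC d x"
    and scaleC_scaleC: "scaleC c (scaleC d x) = scaleC (c * d) x"
    and scaleC_one: "scaleC 1 x = x"
    and scaleC_of_real: "scaleC (complex_of_real r) x = scaleR r x"
    and norm_scaleC: "norm (scaleC c x) = cmod c * norm x"
    and scaleC_mult_left: "scaleC c (x * y) = scaleC c x * y"
    and scaleC_mult_right: "scaleC c (x * y) = x * scaleC c y"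
    and star_add: "star (x + y) = star x + star y"
    and star_scaleC: "star (scaleC c x) = scaleC (cnj c) (star x)"
    and star_mult: "star (x * y) = star y * star x"
    and star_star: "star (star x) = x"
    and cstar_identity: "norm (star x * x) = (norm x)\<^sup>2"

definition clinear_map :: "(complex \<Rightarrow> 'a::real_normed_algebra_1 \<Rightarrow> 'a) \<Rightarrow> ('a \<Rightarrow> 'a) \<Rightarrow> bool" where
  "clinear_map scaleC f \<longleftrightarrow>
     (\<forall>x y. f (x + y) = f x + f y) \<and> (\<forall>c x. f (scaleC c x) = scaleC c (f x))"

definition positive_elem :: "('a::real_normed_algebra_1 \<Rightarrow> 'a) \<Rightarrow> 'a \<Rightarrow> bool" where
  "positive_elem star a \<longleftrightarrow> (\<exists>b. a = star b * b)"

definition positive_map :: "('a::real_normed_algebra_1 \<Rightarrow> 'a) \<Rightarrow> ('a \<Rightarrow> 'a) \<Rightarrow> bool" where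
  "positive_map star f \<longleftrightarrow> (\<forall>a. positive_elem star a \<longrightarrow> positive_elem star (f a))"

definition star_endomorphism ::
  "(complex \<Rightarrow> 'a::real_normed_algebra_1 \<Rightarrow> 'a) \<Rightarrow> ('a \<Rightarrow> 'a) \<Rightarrow> ('a \<Rightarrow> 'a) \<Rightarrow> bool" where
  "star_endomorphism scaleC star \<delta> \<longleftrightarrow>
     clinear_map scaleC \<delta> \<and> (\<forall>a b. \<delta> (a * b) = \<delta> a * \<delta> b) \<and> (\<forall>a. \<delta> (star a) = star (\<delta> a))"

definition transfer_operator ::
  "(complex \<Rightarrow> 'a::real_normed_algebra_1 \<Rightarrow> 'a) \<Rightarrow> ('a \<Rightarrow> 'a) \<Rightarrow> ('a \<Rightarrow> 'a) \<Rightarrow> ('a \<Rightarrow> 'a) \<Rightarrow> bool" where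
  "transfer_operator scaleC star \<delta> T \<longleftrightarrow>
     continuous_on UNIV T \<and> positive_map star T \<and> clinear_map scaleC T \<and>
     (\<forall>a b. T (\<delta> a * b) = a * T b)"

definition nondegenerate_transfer_operator ::
  "(complex \<Rightarrow> 'a::real_normed_algebra_1 \<Rightarrow> 'a) \<Rightarrow> ('a \<Rightarrow> 'a) \<Rightarrow> ('a \<Rightarrow> 'a) \<Rightarrow> ('a \<Rightarrow> 'a) \<Rightarrow> bool" where
  "nondegenerate_transfer_operator scaleC star \<delta> T \<longleftrightarrow>
     transfer_operator scaleC star \<delta> T \<and> \<delta> (T 1) = \<delta> 1"

end

theory Submission
  imports Defs
begin

text \<open>A non-degenerate transfer operator \<open>T\<close> satisfies
\<open>T b = T (b \<delta>(1)) = T (b \<delta>(T 1)) = T b T 1\<close>, and every transfer operator \<open>S\<close> satisfies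
\<open>S (\<delta> y) = y S 1\<close>. For \<open>p = T\<^sub>1 1\<close> and \<open>q = T\<^sub>2 1\<close> this gives \<open>q p = p\<close> and \<open>p q = q\<close>,
hence \<open>p = p\<^sup>* = (q p)\<^sup>* = p q = q\<close>, and then \<open>T\<^sub>1 b = T\<^sub>1 b q = T\<^sub>2 (\<delta> (T\<^sub>1 b))\<close>.
Positivity is needed only to make transfer operators \<open>*\<close>-preserving (by polarization every
element is a combination of four positive ones); this yields the right-module law
\<open>T (b \<delta> a) = T b a\<close> and the self-adjointness of \<open>T 1\<close>.\<close>

lemma clinear_map_zero: "clinear_map scaleC f \<Longrightarrow> f 0 = 0"
  unfolding clinear_map_def by (metis add_cancel_right_right add_0)

context cstar_algebra
begin

lemma scaleC_zero_left: "scaleC 0 x = 0"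
  using scaleC_of_real[of 0 x] by simp

lemma scaleC_zero_right: "scaleC c 0 = 0"
  using scaleC_add_right[of c 0 0] by simp

lemma star_zero: "star 0 = 0"
  using star_add[of 0 0] by simp

lemma star_one: "star 1 = 1"
  by (metis star_mult star_star mult_1_left)

lemma scaleC_mult_scaleC: "scaleC c x * scaleC d y = scaleC (c * d) (x * y)"
  by (metis scaleC_mult_left scaleC_mult_right scaleC_scaleC)

lemma scaleC_sum_left: "scaleC (\<Sum>k\<in>A. c k) x = (\<Sum>k\<in>A. scaleC (c k) x)"
  using sum_comp_morphism[of "\<lambda>c. scaleC c x" c A]
  by (simp add: scaleC_zero_left scaleC_add_left o_def)

lemma scaleC_sum_right: "scaleC c (\<Sum>k\<in>A. p k) = (\<Sum>k\<in>A. scaleC c (p k))"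
  using sum_comp_morphism[of "scaleC c" p A]
  by (simp add: scaleC_zero_right scaleC_add_right o_def)

lemma star_sum_scaleC:
  "star (\<Sum>k\<in>A. scaleC (c k) (p k)) = (\<Sum>k\<in>A. scaleC (cnj (c k)) (star (p k)))"
  using sum_comp_morphism[of star "\<lambda>k. scaleC (c k) (p k)" A]
  by (simp add: star_zero star_add star_scaleC o_def)

lemma clinear_map_sum_scaleC:
  assumes "clinear_map scaleC f"
  shows "f (\<Sum>k\<in>A. scaleC (c k) (p k)) = (\<Sum>k\<in>A. scaleC (c k) (f (p k)))"
  using sum_comp_morphism[of f "\<lambda>k. scaleC (c k) (p k)" A] assms clinear_map_zero[OF assms]
  by (simp add: clinear_map_def o_def)

lemma positive_elem_self_adjoint: "positive_elem star a \<Longrightarrow> star a = a"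
  unfolding positive_elem_def by (auto simp: star_mult star_star)

lemma scaleC_shifted_square_expand:
  "scaleC c (star (x + scaleC c 1) * (x + scaleC c 1)) =
     scaleC c (star x * x) + scaleC (c * c) (star x) + scaleC (c * cnj c) x + scaleC (c * cnj c * c) 1"
proof -
  have "star (x + scaleC c 1) * (x + scaleC c 1) =
      star x * x + star x * scaleC c 1 + scaleC (cnj c) 1 * x + scaleC (cnj c) 1 * scaleC c 1"
    by (simp add: star_add star_scaleC star_one distrib_left distrib_right add_ac)
  also have "\<dots> = star x * x + scaleC c (star x) + scaleC (cnj c) x + scaleC (cnj c * c) 1"
    by (simp add: scaleC_mult_scaleC scaleC_scaleC mult.commute flip: scaleC_mult_left scaleC_mult_right)
  finally show ?thesis
    by (simp add: scaleC_add_right scaleC_scaleC mult.assoc)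
qed

lemma polarization:
  "x = (\<Sum>k<4. scaleC (\<i> ^ k / 4) (star (x + scaleC (\<i> ^ k) 1) * (x + scaleC (\<i> ^ k) 1)))"
proof -
  let ?P = "\<lambda>c. star (x + scaleC c 1) * (x + scaleC c 1)"
  have "(\<Sum>k<4. scaleC (\<i> ^ k) (?P (\<i> ^ k)))
      = scaleC (\<Sum>k<4. \<i> ^ k) (star x * x) + scaleC (\<Sum>k<4. \<i> ^ k * \<i> ^ k) (star x)
        + scaleC (\<Sum>k<4. \<i> ^ k * cnj (\<i> ^ k)) x + scaleC (\<Sum>k<4. \<i> ^ k * cnj (\<i> ^ k) * \<i> ^ k) 1"
    by (simp only: scaleC_shifted_square_expand sum.distrib scaleC_sum_left)
  also have "\<dots> = scaleC 4 x"
    by (simp add: eval_nat_numeral scaleC_zero_left)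
  finally have "scaleC (1 / 4) (\<Sum>k<4. scaleC (\<i> ^ k) (?P (\<i> ^ k))) = x"
    by (simp add: scaleC_scaleC scaleC_one)
  then show ?thesis
    by (simp add: scaleC_scaleC scaleC_sum_right)
qed

lemma positive_span: "\<exists>c p. (\<forall>k. positive_elem star (p k)) \<and> x = (\<Sum>k<(4::nat). scaleC (c k) (p k))"
proof (intro exI conjI allI)
  let ?p = "\<lambda>k::nat. star (x + scaleC (\<i> ^ k) 1) * (x + scaleC (\<i> ^ k) 1)"
  show "positive_elem star (?p k)" for k
    unfolding positive_elem_def by blast
  show "x = (\<Sum>k<4. scaleC (\<i> ^ k / 4) (?p k))"
    by (rule polarization)
qed

lemma positive_clinear_map_star:
  assumes "clinear_map scaleC f" and "positive_map star f"
  shows "f (star x) = star (f x)"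
proof -
  obtain c p where pos: "\<And>k. positive_elem star (p k)" and x: "x = (\<Sum>k<(4::nat). scaleC (c k) (p k))"
    using positive_span by blast
  have "f (star x) = (\<Sum>k<4. scaleC (cnj (c k)) (f (p k)))"
    using pos by (simp add: x star_sum_scaleC positive_elem_self_adjoint clinear_map_sum_scaleC[OF assms(1)])
  also have "\<dots> = star (f x)"
    using pos assms(2) unfolding positive_map_def
    by (simp add: x clinear_map_sum_scaleC[OF assms(1)] star_sum_scaleC positive_elem_self_adjoint)
  finally show ?thesis .
qed

lemma self_adjoint_absorbing_eq:
  assumes "star p = p" and "star q = q" and "q * p = p" and "p * q = q"
  shows "p = q"
  by (metis assms star_mult)

lemma transfer_operator_star:
  "transfer_operator scaleC star \<delta> T \<Longrightarrow> T (star x) = star (T x)"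
  unfolding transfer_operator_def by (blast intro: positive_clinear_map_star)

lemma transfer_operator_one_self_adjoint:
  "transfer_operator scaleC star \<delta> T \<Longrightarrow> star (T 1) = T 1"
  using transfer_operator_star[of \<delta> T 1] by (simp add: star_one)

lemma transfer_operator_image:
  "transfer_operator scaleC star \<delta> T \<Longrightarrow> T (\<delta> a) = a * T 1"
  unfolding transfer_operator_def by (metis mult_1_right)

lemma transfer_operator_right_module:
  assumes "star_endomorphism scaleC star \<delta>" and T: "transfer_operator scaleC star \<delta> T"
  shows "T (b * \<delta> a) = T b * a"
proof -
  have "T (b * \<delta> a) = star (T (\<delta> (star a) * star b))"
    using assms unfolding star_endomorphism_def
    by (simp add: star_mult star_star flip: transfer_operator_star[OF T])
  also have "\<dots> = star (star a * T (star b))"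
    using T unfolding transfer_operator_def by simp
  also have "\<dots> = T b * a"
    by (simp add: star_mult star_star transfer_operator_star[OF T])
  finally show ?thesis .
qed

lemma nondegenerate_transfer_operator_mult_one:
  assumes "star_endomorphism scaleC star \<delta>" and "nondegenerate_transfer_operator scaleC star \<delta> T"
  shows "T b * T 1 = T b"
proof -
  have T: "transfer_operator scaleC star \<delta> T" and nd: "\<delta> (T 1) = \<delta> 1"
    using assms(2) unfolding nondegenerate_transfer_operator_def by blast+
  have "T b * T 1 = T (b * \<delta> (T 1))"
    using transfer_operator_right_module[OF assms(1) T] by simp
  also have "\<dots> = T (b * \<delta> 1)"
    by (simp only: nd)
  also have "\<dots> = T b"
    using transfer_operator_right_module[OF assms(1) T, of b 1] by simp
  finally show ?thesis .
qed

lemma nondegenerate_transfer_operator_absorbs_one: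
  assumes "nondegenerate_transfer_operator scaleC star \<delta> S" and "transfer_operator scaleC star \<delta> T"
  shows "S 1 * T 1 = T 1"
  using assms transfer_operator_image[OF assms(2), of "S 1"] transfer_operator_image[OF assms(2), of 1]
  unfolding nondegenerate_transfer_operator_def by simp

lemma range_nondegenerate_transfer_operator_subset:
  assumes "star_endomorphism scaleC star \<delta>" and "nondegenerate_transfer_operator scaleC star \<delta> T"
    and "transfer_operator scaleC star \<delta> S" and "S 1 = T 1"
  shows "range T \<subseteq> range S"
proof
  fix y assume "y \<in> range T"
  then obtain b where y: "y = T b" by blast
  have "y = T b * S 1"
    using nondegenerate_transfer_operator_mult_one[OF assms(1,2)] by (simp add: y assms(4))
  also have "\<dots> = S (\<delta> (T b))"
    by (simp add: transfer_operator_image[OF assms(3)])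
  finally show "y \<in> range S" by blast
qed

end

theorem proposition5:
  fixes scaleC :: "complex \<Rightarrow> 'a::{real_normed_algebra_1, banach} \<Rightarrow> 'a"
    and star :: "'a \<Rightarrow> 'a"
    and \<delta> T1 T2 :: "'a \<Rightarrow> 'a"
  assumes "cstar_algebra scaleC star"
    and "star_endomorphism scaleC star \<delta>"
    and "nondegenerate_transfer_operator scaleC star \<delta> T1"
    and "nondegenerate_transfer_operator scaleC star \<delta> T2"
  shows "T1 1 = T2 1 \<and> range T1 = range T2"
proof -
  interpret cstar_algebra scaleC star by fact
  have T1: "transfer_operator scaleC star \<delta> T1" and T2: "transfer_operator scaleC star \<delta> T2"
    using assms(3,4) unfolding nondegenerate_transfer_operator_def by blast+
  have one: "T1 1 = T2 1"
    by (rule self_adjoint_absorbing_eq)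
      (use T1 T2 assms(3,4) in \<open>simp_all add: transfer_operator_one_self_adjoint
        nondegenerate_transfer_operator_absorbs_one\<close>)
  have "range T1 \<subseteq> range T2"
    using range_nondegenerate_transfer_operator_subset[OF assms(2,3) T2] one by simp
  moreover have "range T2 \<subseteq> range T1"
    using range_nondegenerate_transfer_operator_subset[OF assms(2,4) T1] one by simp
  ultimately show ?thesis
    using one by blast
qed

end
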